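(* Let $p,k\ge 1$ be integers, let $a_1,\dots,a_k\in\mathbb{R}$, and let $\mathbf{f}:\mathbb{R}^p\to\mathbb{R}^p$ be a differentiable flux. Let $\mathbb{M}_1,\dots,\mathbb{M}_k:\mathbb{R}^p\to\mathbb{R}^p$ be differentiable maps satisfying, for all $\mathbf{u}$, $\sum_{i=1}^k \mathbb{M}_i(\mathbf{u})=\mathbf{u}$ and $\sum_{i=1}^k a_i\mathbb{M}_i(\mathbf{u})=\mathbf{f}(\mathbf{u})$, and set $\mathbf{m}_2(\mathbf{u})=\sum_{i=1}^k a_i^2\mathbb{M}_i(\mathbf{u})$. Fix $\mathbf{u}$ and suppose there exists a strictly convex entropy $\eta(\mathbf{u})$ with Hessian matrix $\mathbf{A}_0$ such that (1) $\mathbf{A}_0\mathbf{f}'(\mathbf{u})$ is symmetric, (2) $\mathbf{A}_0\mathbb{M}_i'(\mathbf{u})$ is symmetric positive definite for all $i$, and (3) $\min_i|a_i|>\rho(\mathbf{f}'(\mathbf{u}))$ (spectral radius). Then the matrix $\mathbf{m}_2'(\mathbf{u})-(\mathbf{f}'(\mathbf{u}))^2$ has real strictly positive eigenvalues and is invertible.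
   Context: Primes denote Jacobian matrices with respect to $\mathbf{u}$. In the kinetic model, $\mathbf{m}_2=\mathbb{P}\Lambda^2\mathbb{M}$ with $\Lambda=\mathrm{diag}(a_1\mathbf{I}_p,\dots,a_k\mathbf{I}_p)$ and $\mathbb{P}=(\mathbf{I}_p\ \cdots\ \mathbf{I}_p)$. *)

theory Defs
  imports "HOL-Analysis.Analysis"
begin

definition strict_convex_on :: "'a::real_vector set \<Rightarrow> ('a \<Rightarrow> real) \<Rightarrow> bool" where
  "strict_convex_on S g \<longleftrightarrow> convex S \<and>
     (\<forall>x\<in>S. \<forall>y\<in>S. x \<noteq> y \<longrightarrow> (\<forall>t::real. 0 < t \<and> t < 1 \<longrightarrow>
        g ((1 - t) *\<^sub>R x + t *\<^sub>R y) < (1 - t) * g x + t * g y))"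

definition grad :: "(real^'n \<Rightarrow> real) \<Rightarrow> real^'n \<Rightarrow> real^'n" where
  "grad g y = (\<chi> i. frechet_derivative g (at y) (axis i 1))"

definition hessian :: "(real^'n \<Rightarrow> real) \<Rightarrow> real^'n \<Rightarrow> real^'n^'n" where
  "hessian g y = jacobian (grad g) (at y)"

definition symmetric_mat :: "real^'n^'n \<Rightarrow> bool" where
  "symmetric_mat A \<longleftrightarrow> transpose A = A"

definition pos_def_sym :: "real^'n^'n \<Rightarrow> bool" where
  "pos_def_sym A \<longleftrightarrow> symmetric_mat A \<and> (\<forall>x. x \<noteq> 0 \<longrightarrow> x \<bullet> (A *v x) > 0)"

definition cmat :: "real^'n^'m \<Rightarrow> complex^'n^'m" where
  "cmat A = (\<chi> i j. complex_of_real (A $ i $ j))"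

definition eigenvalues :: "real^'n^'n \<Rightarrow> complex set" where
  "eigenvalues A = {c. \<exists>v::complex^'n. v \<noteq> 0 \<and> cmat A *v v = c *s v}"

definition spec_radius :: "real^'n^'n \<Rightarrow> real" where
  "spec_radius A = Max (cmod ` eigenvalues A)"

end

theory Submission
  imports Defs
begin

text \<open>
  Write \<open>B\<^sub>i = M\<^sub>i'(u)\<close>, \<open>J = f'(u)\<close> and \<open>C\<^sub>i = A\<^sub>0 B\<^sub>i\<close>. The moment relations give
  \<open>A\<^sub>0 = \<Sum> C\<^sub>i\<close>, \<open>A\<^sub>0 J = \<Sum> a\<^sub>i C\<^sub>i\<close> and \<open>A\<^sub>0 m\<^sub>2' = \<Sum> a\<^sub>i\<^sup>2 C\<^sub>i\<close>, so \<open>P = A\<^sub>0 (m\<^sub>2' - J\<^sup>2)\<close> is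
  symmetric with \<open>x \<bullet> P x = \<Sum> (a\<^sub>i x - J x) \<bullet> C\<^sub>i (a\<^sub>i x - J x) \<ge> 0\<close>. Equality at some
  \<open>x \<noteq> 0\<close> would make \<open>x\<close> an eigenvector of \<open>J\<close> for every \<open>a\<^sub>i\<close>, forcing all \<open>a\<^sub>i\<close> to be
  equal and \<open>J = a I\<close>, whose spectral radius \<open>\<bar>a\<bar>\<close> contradicts the hypothesis. Finally, if
  \<open>(m\<^sub>2' - J\<^sup>2) v = c v\<close> with \<open>v \<noteq> 0\<close> complex, then \<open>v\<^sup>* P v = c v\<^sup>* A\<^sub>0 v\<close> with both Hermitian
  forms real and positive, so \<open>c > 0\<close>.
\<close>

lemma jacobian_at_eq:
  fixes X :: "real^'n^'m"
  assumes "(F has_derivative (\<lambda>h. X *v h)) (at u)"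
  shows "jacobian F (at u) = X"
  unfolding jacobian_def frechet_derivative_at[OF assms, symmetric] by (rule matrix_of_matrix_vector_mul)

lemma jacobian_ident: "jacobian (\<lambda>x. x) (at u) = (mat 1 :: real^'n^'n)"
  by (rule jacobian_at_eq) simp

lemma matrix_vector_mult_sum_left:
  fixes X :: "'i \<Rightarrow> real^'n^'m"
  shows "(\<Sum>i\<in>I. X i) *v h = (\<Sum>i\<in>I. X i *v h)"
  by (induction I rule: infinite_finite_induct) (simp_all add: matrix_vector_mult_add_rdistrib)

lemma jacobian_scaleR_sum:
  fixes g :: "'i \<Rightarrow> real^'n \<Rightarrow> real^'m"
  assumes "finite I" and "\<And>i. i \<in> I \<Longrightarrow> g i differentiable (at u)"
  shows "jacobian (\<lambda>x. \<Sum>i\<in>I. c i *\<^sub>R g i x) (at u) = (\<Sum>i\<in>I. c i *\<^sub>R jacobian (g i) (at u))"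
proof (rule jacobian_at_eq)
  have "((\<lambda>x. \<Sum>i\<in>I. c i *\<^sub>R g i x) has_derivative
         (\<lambda>h. \<Sum>i\<in>I. c i *\<^sub>R (jacobian (g i) (at u) *v h))) (at u)"
    using assms(2) by (intro has_derivative_sum has_derivative_scaleR_right jacobian_works[THEN iffD1])
  then show "((\<lambda>x. \<Sum>i\<in>I. c i *\<^sub>R g i x) has_derivative
         (\<lambda>h. (\<Sum>i\<in>I. c i *\<^sub>R jacobian (g i) (at u)) *v h)) (at u)"
    by (simp add: matrix_vector_mult_sum_left scaleR_matrix_vector_assoc)
qed

lemma inner_matrix_scaleR_sum:
  fixes X :: "'i \<Rightarrow> real^'n^'n"
  shows "x \<bullet> ((\<Sum>i\<in>I. c i *\<^sub>R X i) *v y) = (\<Sum>i\<in>I. c i * (x \<bullet> (X i *v y)))"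
  by (simp add: matrix_vector_mult_sum_left inner_sum_right scaleR_matrix_vector_assoc[symmetric])

lemma matrix_mul_scaleR_sum_right:
  fixes A :: "real^'n^'m" and X :: "'i \<Rightarrow> real^'k^'n"
  shows "A ** (\<Sum>i\<in>I. c i *\<^sub>R X i) = (\<Sum>i\<in>I. c i *\<^sub>R (A ** X i))"
  by (induction I rule: infinite_finite_induct)
    (simp_all add: matrix_add_ldistrib matrix_scalar_ac scalar_matrix_assoc)

lemma matrix_mul_diff_right:
  fixes A :: "real^'n^'m"
  shows "A ** (X - Y) = A ** X - A ** Y"
  by (simp add: matrix_matrix_mult_def vec_eq_iff sum_subtractf algebra_simps)

lemma symmetric_mat_inner_commute:
  assumes "symmetric_mat X"
  shows "x \<bullet> (X *v y) = y \<bullet> (X *v x)"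
proof -
  have "x \<bullet> (X *v y) = (x v* X) \<bullet> y"
    by (simp add: dot_lmul_matrix)
  also have "\<dots> = (transpose X *v x) \<bullet> y"
    by simp
  also have "\<dots> = y \<bullet> (X *v x)"
    using assms by (simp only: symmetric_mat_def inner_commute)
  finally show ?thesis .
qed

lemma symmetric_mat_scaleR_sum:
  assumes "\<And>i. i \<in> I \<Longrightarrow> symmetric_mat (X i)"
  shows "symmetric_mat (\<Sum>i\<in>I. c i *\<^sub>R X i)"
  using assms unfolding symmetric_mat_def
  by (induction I rule: infinite_finite_induct) (simp_all add: transpose_scalar transpose_def vec_eq_iff)

lemma symmetric_mat_diff:
  "symmetric_mat X \<Longrightarrow> symmetric_mat Y \<Longrightarrow> symmetric_mat (X - Y)"
  by (simp add: symmetric_mat_def transpose_def vec_eq_iff)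

lemma symmetric_mat_mult_square:
  assumes A: "symmetric_mat A" and AJ: "symmetric_mat (A ** J)"
  shows "symmetric_mat (A ** (J ** J))"
proof -
  have JA: "transpose J ** A = A ** J"
    using A AJ by (simp add: symmetric_mat_def matrix_transpose_mul)
  have "transpose (A ** (J ** J)) = transpose J ** (transpose J ** transpose A)"
    by (simp add: matrix_transpose_mul matrix_mul_assoc)
  also have "\<dots> = (transpose J ** A) ** J"
    using A by (simp add: symmetric_mat_def JA matrix_mul_assoc)
  finally show ?thesis
    by (simp add: symmetric_mat_def JA matrix_mul_assoc)
qed

lemma pos_def_sym_sum:
  assumes "finite I" and "I \<noteq> {}" and "\<And>i. i \<in> I \<Longrightarrow> pos_def_sym (C i)"
  shows "pos_def_sym (\<Sum>i\<in>I. C i)"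
proof -
  have "symmetric_mat (\<Sum>i\<in>I. 1 *\<^sub>R C i)"
    using assms(3) by (intro symmetric_mat_scaleR_sum) (simp add: pos_def_sym_def)
  moreover have "x \<bullet> ((\<Sum>i\<in>I. C i) *v x) > 0" if "x \<noteq> 0" for x
    using assms that
    by (simp add: matrix_vector_mult_sum_left inner_sum_right pos_def_sym_def sum_pos)
  ultimately show ?thesis by (simp add: pos_def_sym_def)
qed

lemma second_moment_quadratic_form:
  fixes C :: "'i \<Rightarrow> real^'n^'n"
  assumes sym: "\<And>i. i \<in> I \<Longrightarrow> symmetric_mat (C i)"
    and A: "A = (\<Sum>i\<in>I. C i)"
    and AJ: "A ** J = (\<Sum>i\<in>I. a i *\<^sub>R C i)"
    and AM: "A ** M = (\<Sum>i\<in>I. (a i)\<^sup>2 *\<^sub>R C i)"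
  shows "x \<bullet> (A ** (M - J ** J) *v x)
           = (\<Sum>i\<in>I. (a i *\<^sub>R x - J *v x) \<bullet> (C i *v (a i *\<^sub>R x - J *v x)))"
proof -
  define y where "y = J *v x"
  have expand: "(a i *\<^sub>R x - y) \<bullet> (C i *v (a i *\<^sub>R x - y))
      = (a i)\<^sup>2 * (x \<bullet> (C i *v x)) - 2 * (a i * (y \<bullet> (C i *v x))) + y \<bullet> (C i *v y)"
    if "i \<in> I" for i
    using symmetric_mat_inner_commute[OF sym[OF that], of x y]
    by (simp add: matrix_vector_mult_diff_distrib inner_diff_left inner_diff_right
        scaleR_matrix_vector_assoc[symmetric] vector_scaleR_matrix_ac power2_eq_square algebra_simps)
  have A_form: "z \<bullet> (A *v w) = (\<Sum>i\<in>I. z \<bullet> (C i *v w))" for z w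
    using inner_matrix_scaleR_sum[of z "\<lambda>_. 1" C I w] by (simp add: A)
  have "symmetric_mat (A ** J)"
    unfolding AJ using sym by (rule symmetric_mat_scaleR_sum)
  then have "x \<bullet> (A ** (J ** J) *v x) = y \<bullet> (A *v y)"
    by (metis symmetric_mat_inner_commute matrix_mul_assoc matrix_vector_mul_assoc y_def)
  then have "x \<bullet> (A ** (M - J ** J) *v x)
      = (\<Sum>i\<in>I. (a i)\<^sup>2 * (x \<bullet> (C i *v x))) - 2 * (\<Sum>i\<in>I. a i * (y \<bullet> (C i *v x)))
        + (\<Sum>i\<in>I. y \<bullet> (C i *v y))"
    using inner_matrix_scaleR_sum[of x "\<lambda>i. (a i)\<^sup>2" C I x]
      inner_matrix_scaleR_sum[of y a C I x] A_form[of y y]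
    by (simp add: matrix_mul_diff_right matrix_vector_mult_diff_rdistrib inner_diff_right
        AM AJ[symmetric] matrix_vector_mul_assoc[symmetric] y_def[symmetric])
  also have "\<dots> = (\<Sum>i\<in>I. (a i *\<^sub>R x - y) \<bullet> (C i *v (a i *\<^sub>R x - y)))"
    by (simp add: expand sum.distrib sum_subtractf sum_distrib_left)
  finally show ?thesis by (simp add: y_def)
qed

lemma pos_def_sym_second_moment:
  fixes C :: "'i \<Rightarrow> real^'n^'n"
  assumes "finite I"
    and spd: "\<And>i. i \<in> I \<Longrightarrow> pos_def_sym (C i)"
    and A: "A = (\<Sum>i\<in>I. C i)"
    and AJ: "A ** J = (\<Sum>i\<in>I. a i *\<^sub>R C i)"
    and AM: "A ** M = (\<Sum>i\<in>I. (a i)\<^sup>2 *\<^sub>R C i)"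
    and no_common_eigenvector: "\<And>x. x \<noteq> 0 \<Longrightarrow> \<exists>i\<in>I. J *v x \<noteq> a i *\<^sub>R x"
  shows "pos_def_sym (A ** (M - J ** J))"
proof -
  have sym: "symmetric_mat (C i)" if "i \<in> I" for i
    using spd[OF that] by (simp add: pos_def_sym_def)
  have "symmetric_mat A"
    using symmetric_mat_scaleR_sum[of I C "\<lambda>_. 1"] sym by (simp add: A)
  moreover have "symmetric_mat (A ** J)" "symmetric_mat (A ** M)"
    unfolding AJ AM using sym by (auto intro: symmetric_mat_scaleR_sum)
  ultimately have "symmetric_mat (A ** (M - J ** J))"
    by (simp add: matrix_mul_diff_right symmetric_mat_diff symmetric_mat_mult_square)
  moreover have "x \<bullet> (A ** (M - J ** J) *v x) > 0" if x_nz: "x \<noteq> 0" for x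
  proof -
    define d where "d i = a i *\<^sub>R x - J *v x" for i
    obtain j where "j \<in> I" "d j \<noteq> 0"
      using no_common_eigenvector[OF x_nz] by (auto simp: d_def)
    moreover have "d i \<bullet> (C i *v d i) \<ge> 0" if "i \<in> I" for i
      using spd[OF that] by (cases "d i = 0") (auto simp: pos_def_sym_def less_imp_le)
    ultimately have "(\<Sum>i\<in>I. d i \<bullet> (C i *v d i)) > 0"
      using \<open>finite I\<close> spd by (intro sum_pos2[where i=j]) (auto simp: pos_def_sym_def)
    then show ?thesis
      using second_moment_quadratic_form[OF sym A AJ AM] by (simp add: d_def)
  qed
  ultimately show ?thesis
    by (simp add: pos_def_sym_def)
qed

lemma cmat_scalar_mat_mult:
  "cmat (c *\<^sub>R mat 1 :: real^'n^'n) *v v = complex_of_real c *s v"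
proof -
  have "cmat (c *\<^sub>R mat 1 :: real^'n^'n) = mat (complex_of_real c)"
    by (simp add: cmat_def mat_def vec_eq_iff)
  then show ?thesis
    by (simp add: matrix_vector_mult_def mat_def vec_eq_iff if_distrib[of "\<lambda>x. x * _"] cong: if_cong)
qed

lemma eigenvalues_scalar_mat:
  "eigenvalues (c *\<^sub>R mat 1 :: real^'n^'n) = {complex_of_real c}"
proof (intro equalityI subsetI)
  fix e assume "e \<in> eigenvalues (c *\<^sub>R mat 1 :: real^'n^'n)"
  then obtain v :: "complex^'n" where "v \<noteq> 0" and "complex_of_real c *s v = e *s v"
    by (auto simp: eigenvalues_def cmat_scalar_mat_mult)
  moreover from \<open>v \<noteq> 0\<close> obtain i where "v $ i \<noteq> 0"
    by (auto simp: vec_eq_iff)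
  ultimately show "e \<in> {complex_of_real c}"
    by (auto simp: vec_eq_iff dest: spec[of _ i])
next
  fix e assume "e \<in> {complex_of_real c}"
  then show "e \<in> eigenvalues (c *\<^sub>R mat 1 :: real^'n^'n)"
    unfolding eigenvalues_def
    by (intro CollectI exI[of _ "vec 1"]) (simp add: cmat_scalar_mat_mult vec_eq_iff)
qed

lemma spec_radius_scalar_mat: "spec_radius (c *\<^sub>R mat 1 :: real^'n^'n) = \<bar>c\<bar>"
  by (simp add: spec_radius_def eigenvalues_scalar_mat)

lemma scalar_mat_if_common_eigenvector:
  assumes B: "(\<Sum>i\<in>I. B i) = mat 1"
    and J: "J = (\<Sum>i\<in>I. a i *\<^sub>R B i)"
    and "x \<noteq> 0" and eigen: "\<And>i. i \<in> I \<Longrightarrow> J *v x = a i *\<^sub>R x" and "j \<in> I"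
  shows "J = a j *\<^sub>R mat 1"
proof -
  have "a i = a j" if "i \<in> I" for i
    using eigen[OF that] eigen[OF \<open>j \<in> I\<close>] \<open>x \<noteq> 0\<close> by (simp add: scaleR_cancel_right)
  then have "J = (\<Sum>i\<in>I. a j *\<^sub>R B i)"
    unfolding J by (intro sum.cong) auto
  then show ?thesis
    by (simp add: B flip: scaleR_sum_right)
qed

lemma no_common_eigenvector_if_spec_radius_less:
  assumes "finite I" and "I \<noteq> {}"
    and B: "(\<Sum>i\<in>I. B i) = mat 1" and J: "J = (\<Sum>i\<in>I. a i *\<^sub>R B i)"
    and radius: "spec_radius J < Min ((\<lambda>i. \<bar>a i\<bar>) ` I)"
    and "x \<noteq> 0"
  shows "\<exists>i\<in>I. J *v x \<noteq> a i *\<^sub>R x"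
proof (rule ccontr)
  assume "\<not> ?thesis"
  moreover obtain j where "j \<in> I"
    using \<open>I \<noteq> {}\<close> by blast
  ultimately have "J = a j *\<^sub>R mat 1"
    using scalar_mat_if_common_eigenvector[OF B J \<open>x \<noteq> 0\<close>] by blast
  then have "spec_radius J = \<bar>a j\<bar>"
    by (simp add: spec_radius_scalar_mat)
  moreover have "Min ((\<lambda>i. \<bar>a i\<bar>) ` I) \<le> \<bar>a j\<bar>"
    using \<open>finite I\<close> \<open>j \<in> I\<close> by (intro Min_le) auto
  ultimately show False
    using radius by simp
qed

lemma pos_def_sym_moment_relations:
  fixes A :: "real^'n^'n" and B :: "'i \<Rightarrow> real^'n^'n"
  assumes "finite I" and "I \<noteq> {}"
    and spd: "\<And>i. i \<in> I \<Longrightarrow> pos_def_sym (A ** B i)"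
    and B: "(\<Sum>i\<in>I. B i) = mat 1"
    and J: "J = (\<Sum>i\<in>I. a i *\<^sub>R B i)"
    and M: "M = (\<Sum>i\<in>I. (a i)\<^sup>2 *\<^sub>R B i)"
    and radius: "spec_radius J < Min ((\<lambda>i. \<bar>a i\<bar>) ` I)"
  shows "pos_def_sym A" and "pos_def_sym (A ** (M - J ** J))"
proof -
  have A: "A = (\<Sum>i\<in>I. A ** B i)"
    using matrix_mul_scaleR_sum_right[of A "\<lambda>_. 1" B I] by (simp add: B)
  show "pos_def_sym A"
    by (subst A) (rule pos_def_sym_sum[OF assms(1,2) spd])
  show "pos_def_sym (A ** (M - J ** J))"
    using assms(1) spd A
  proof (rule pos_def_sym_second_moment)
    show "A ** J = (\<Sum>i\<in>I. a i *\<^sub>R (A ** B i))" "A ** M = (\<Sum>i\<in>I. (a i)\<^sup>2 *\<^sub>R (A ** B i))"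
      by (simp_all add: J M matrix_mul_scaleR_sum_right)
    show "\<exists>i\<in>I. J *v x \<noteq> a i *\<^sub>R x" if "x \<noteq> 0" for x
      using no_common_eigenvector_if_spec_radius_less[OF assms(1,2) B J radius that] .
  qed
qed

definition Re_vec :: "complex^'n \<Rightarrow> real^'n" where
  "Re_vec v = (\<chi> i. Re (v $ i))"

definition Im_vec :: "complex^'n \<Rightarrow> real^'n" where
  "Im_vec v = (\<chi> i. Im (v $ i))"

definition herm_form :: "real^'n^'n \<Rightarrow> complex^'n \<Rightarrow> complex" where
  "herm_form X v = (\<Sum>i\<in>UNIV. cnj (v $ i) * (cmat X *v v) $ i)"

lemma Re_herm_form:
  "Re (herm_form X v) = Re_vec v \<bullet> (X *v Re_vec v) + Im_vec v \<bullet> (X *v Im_vec v)"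
  unfolding herm_form_def cmat_def matrix_vector_mult_def inner_vec_def Re_vec_def Im_vec_def
  by (simp add: Re_sum sum_distrib_left sum.distrib[symmetric] algebra_simps)

lemma Im_herm_form:
  "Im (herm_form X v) = Re_vec v \<bullet> (X *v Im_vec v) - Im_vec v \<bullet> (X *v Re_vec v)"
  unfolding herm_form_def cmat_def matrix_vector_mult_def inner_vec_def Re_vec_def Im_vec_def
  by (simp add: Im_sum sum_distrib_left sum_subtractf[symmetric] algebra_simps)

lemma herm_form_pos_def_sym:
  assumes X: "pos_def_sym X" and "v \<noteq> 0"
  shows "herm_form X v = complex_of_real (Re (herm_form X v))" and "Re (herm_form X v) > 0"
proof -
  have "Im (herm_form X v) = 0"
    using X by (simp add: Im_herm_form pos_def_sym_def symmetric_mat_inner_commute)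
  then show "herm_form X v = complex_of_real (Re (herm_form X v))"
    by (simp add: complex_eq_iff)
  have nonneg: "w \<bullet> (X *v w) \<ge> 0" for w
    using X by (cases "w = 0") (auto simp: pos_def_sym_def less_imp_le)
  have "Re_vec v \<noteq> 0 \<or> Im_vec v \<noteq> 0"
    using \<open>v \<noteq> 0\<close> by (auto simp: Re_vec_def Im_vec_def vec_eq_iff complex_eq_iff)
  then show "Re (herm_form X v) > 0"
    using X nonneg unfolding Re_herm_form pos_def_sym_def
    by (metis add_nonneg_pos add_pos_nonneg)
qed

lemma herm_form_mult_eigenvector:
  assumes "cmat N *v v = c *s v"
  shows "herm_form (A ** N) v = c * herm_form A v"
proof -
  have "cmat (A ** N) = cmat A ** cmat N"
    by (simp add: cmat_def matrix_matrix_mult_def vec_eq_iff)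
  then have "cmat (A ** N) *v v = cmat A *v (c *s v)"
    by (simp add: matrix_vector_mul_assoc[symmetric] assms)
  also have "\<dots> = c *s (cmat A *v v)"
    by (simp add: matrix_vector_mult_def vec_eq_iff sum_distrib_left algebra_simps)
  finally show ?thesis
    unfolding herm_form_def by (simp add: sum_distrib_left algebra_simps)
qed

lemma eigenvalue_real_pos_if_pos_def_sym_mult:
  fixes A N :: "real^'n^'n"
  assumes A: "pos_def_sym A" and AN: "pos_def_sym (A ** N)" and "c \<in> eigenvalues N"
  shows "Im c = 0 \<and> Re c > 0"
proof -
  obtain v :: "complex^'n" where "v \<noteq> 0" and v: "cmat N *v v = c *s v"
    using \<open>c \<in> eigenvalues N\<close> by (auto simp: eigenvalues_def)
  define \<alpha> where "\<alpha> = Re (herm_form A v)"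
  define \<beta> where "\<beta> = Re (herm_form (A ** N) v)"
  have "complex_of_real \<beta> = c * complex_of_real \<alpha>"
    using herm_form_mult_eigenvector[OF v, of A]
      herm_form_pos_def_sym(1)[OF A \<open>v \<noteq> 0\<close>] herm_form_pos_def_sym(1)[OF AN \<open>v \<noteq> 0\<close>]
    by (simp add: \<alpha>_def \<beta>_def)
  moreover have "\<alpha> > 0" "\<beta> > 0"
    using herm_form_pos_def_sym(2)[OF A \<open>v \<noteq> 0\<close>] herm_form_pos_def_sym(2)[OF AN \<open>v \<noteq> 0\<close>]
    by (simp_all add: \<alpha>_def \<beta>_def)
  ultimately have "c = complex_of_real (\<beta> / \<alpha>)"
    by (simp add: field_simps)
  with \<open>\<alpha> > 0\<close> \<open>\<beta> > 0\<close> show ?thesis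
    by simp
qed

lemma invertible_if_pos_def_sym_mult:
  fixes A N :: "real^'n^'n"
  assumes "pos_def_sym (A ** N)"
  shows "invertible N"
  unfolding invertible_left_inverse matrix_left_invertible_ker
proof (intro allI impI)
  fix x assume "N *v x = 0"
  then have "x \<bullet> (A ** N *v x) = 0"
    by (simp flip: matrix_vector_mul_assoc)
  then show "x = 0"
    using assms by (auto simp: pos_def_sym_def)
qed

theorem corollary1:
  fixes k :: nat and a :: "nat \<Rightarrow> real"
    and f :: "real^'p \<Rightarrow> real^'p"
    and M :: "nat \<Rightarrow> real^'p \<Rightarrow> real^'p"
    and u :: "real^'p"
    and \<eta> :: "real^'p \<Rightarrow> real"
  assumes k: "k \<ge> 1"
    and f_diff: "\<And>x. f differentiable (at x)"
    and M_diff: "\<And>i x. i \<in> {1..k} \<Longrightarrow> M i differentiable (at x)"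
    and sum_M: "\<And>x. (\<Sum>i=1..k. M i x) = x"
    and sum_aM: "\<And>x. (\<Sum>i=1..k. a i *\<^sub>R M i x) = f x"
    and eta_diff: "\<And>x. \<eta> differentiable (at x)"
    and grad_diff: "grad \<eta> differentiable (at u)"
    and eta_convex: "strict_convex_on UNIV \<eta>"
    and sym_f: "symmetric_mat (hessian \<eta> u ** jacobian f (at u))"
    and spd_M: "\<And>i. i \<in> {1..k} \<Longrightarrow> pos_def_sym (hessian \<eta> u ** jacobian (M i) (at u))"
    and radius: "Min ((\<lambda>i. \<bar>a i\<bar>) ` {1..k}) > spec_radius (jacobian f (at u))"
  shows "(\<forall>c\<in>eigenvalues (jacobian (\<lambda>x. \<Sum>i=1..k. (a i)\<^sup>2 *\<^sub>R M i x) (at u)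
                          - jacobian f (at u) ** jacobian f (at u)).
            Im c = 0 \<and> Re c > 0)
       \<and> invertible (jacobian (\<lambda>x. \<Sum>i=1..k. (a i)\<^sup>2 *\<^sub>R M i x) (at u)
                          - jacobian f (at u) ** jacobian f (at u))"
proof -
  define B where "B i = jacobian (M i) (at u)" for i
  have jac: "jacobian (\<lambda>x. \<Sum>i=1..k. c i *\<^sub>R M i x) (at u) = (\<Sum>i=1..k. c i *\<^sub>R B i)" for c
    unfolding B_def using M_diff by (intro jacobian_scaleR_sum) auto
  have "(\<lambda>x. \<Sum>i=1..k. 1 *\<^sub>R M i x) = (\<lambda>x. x)"
    using sum_M by auto
  then have "mat 1 = (\<Sum>i=1..k. 1 *\<^sub>R B i)"
    using jac[of "\<lambda>_. 1"] by (simp only: jacobian_ident)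
  then have B_sum: "(\<Sum>i=1..k. B i) = mat 1"
    by simp
  have "f = (\<lambda>x. \<Sum>i=1..k. a i *\<^sub>R M i x)"
    using sum_aM by auto
  then have J_eq: "jacobian f (at u) = (\<Sum>i=1..k. a i *\<^sub>R B i)"
    by (simp only: jac)
  have spd: "pos_def_sym (hessian \<eta> u ** B i)" if "i \<in> {1..k}" for i
    using spd_M[OF that] by (simp add: B_def)
  have "{1..k} \<noteq> {}"
    using k by simp
  note moments = pos_def_sym_moment_relations[OF finite_atLeastAtMost this spd B_sum J_eq
      jac[of "\<lambda>i. (a i)\<^sup>2"] radius]
  show ?thesis
    using eigenvalue_real_pos_if_pos_def_sym_mult[OF moments] invertible_if_pos_def_sym_mult[OF moments(2)]
    by blast
qed

end
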